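(* Let $\delta > 0$ and $P > 0$, and let $\mathcal{X}$ be a $\delta$-spaced set of real numbers contained in $[-P,P]$. Let $I$ be a finite set, $\mathcal{Y} = \{y_i\}_{i \in I}$ a family of integers and $\{a_i\}_{i \in I}$ complex numbers. Then \[ \sum_{x \in \mathcal{X}} \Big| \sum_{i \in I} a_i e(x y_i) \Big|^2 \leq \pi \left( \mathrm{Card}(\mathcal{X})\, \Delta(\mathcal{Y}) + \frac{\mathrm{Card}(\mathcal{X})}{\delta} \right)^{1/2} (P+2)^{1/2} \, \sup_{k \in \mathbb{Z}} A_{\mathcal{Y}}(k)^{1/2} \, \|a\|^2 , \] where $\Delta(\mathcal{Y}) = \sup_{(i,j) \in I \times I} |y_i - y_j|$, $A_{\mathcal{Y}}(k)$ is the number of pairs $(i,j) \in I \times I$ with $y_i + y_j = k$, and $\|a\|^2 = \sum_{i \in I} |a_i|^2$.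
   Context: $e(z) = e^{2\pi i z}$. For $\delta > 0$, a $\delta$-spaced set of real numbers is a finite set $\mathcal{X}$ of distinct real numbers containing at least two elements such that $|x - x'| \geq \delta$ whenever $x, x'$ are distinct elements of $\mathcal{X}$. *)

theory Defs
  imports "HOL-Analysis.Analysis"
begin

definition e :: "real \<Rightarrow> complex" where
  "e z = exp (2 * complex_of_real pi * \<i> * complex_of_real z)"

definition delta_spaced :: "real \<Rightarrow> real set \<Rightarrow> bool" where
  "delta_spaced \<delta> X \<longleftrightarrow> finite X \<and> card X \<ge> 2 \<and>
     (\<forall>x\<in>X. \<forall>x'\<in>X. x \<noteq> x' \<longrightarrow> \<bar>x - x'\<bar> \<ge> \<delta>)"

definition Delta :: "'i set \<Rightarrow> ('i \<Rightarrow> int) \<Rightarrow> real" where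
  "Delta I y = (if I = {} then 0 else Max ((\<lambda>(i,j). real_of_int \<bar>y i - y j\<bar>) ` (I \<times> I)))"

definition A_count :: "'i set \<Rightarrow> ('i \<Rightarrow> int) \<Rightarrow> int \<Rightarrow> nat" where
  "A_count I y k = card {(i,j) \<in> I \<times> I. y i + y j = k}"

end

theory Submission
  imports Defs
begin

text \<open>
  The proof squares the exponential sum. With \<open>f(x) = \<Sum>\<^sub>i a\<^sub>i e(x y\<^sub>i)\<close>, Cauchy--Schwarz over
  \<open>X\<close> gives \<open>(\<Sum>\<^sub>x |f(x)|\<^sup>2)\<^sup>2 \<le> |X| \<Sum>\<^sub>x |f(x)\<^sup>2|\<^sup>2\<close>, and \<open>f(x)\<^sup>2 = \<Sum>\<^sub>k c\<^sub>k e(x k)\<close> is a trigonometric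
  polynomial whose frequencies \<open>k = y\<^sub>i + y\<^sub>j\<close> lie in an interval of length \<open>L \<le> 2\<Delta>\<close> and whose
  coefficients satisfy \<open>\<Sum>|c\<^sub>k|\<^sup>2 \<le> (sup A) \<parallel>a\<parallel>\<^sup>4\<close>. The heart of the matter is a large sieve
  inequality for \<open>\<delta>\<close>-spaced real points in \<open>[-P, P]\<close> and integer frequencies in an interval of
  length \<open>L\<close>:  \<open>\<Sum>\<^sub>x |\<Sum>\<^sub>k c\<^sub>k e(x k)|\<^sup>2 \<le> 9 (P + 2) (L/2 + 1/\<delta>) \<Sum>|c\<^sub>k|\<^sup>2\<close>; the constant
  \<open>9 \<le> \<pi>\<^sup>2\<close> then gives the theorem.

  The large sieve is proved by duality from the dual inequality for \<open>\<Sum>\<^sub>k |\<Sum>\<^sub>x \<beta>(x) e(x k)|\<^sup>2\<close>.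
  Averaging this over \<open>R \<approx> 1/\<delta>\<close> shifts of the frequency interval turns it into a quadratic
  form in \<open>\<beta>\<close> whose kernel is a product of two Dirichlet sums, bounded by
  \<open>min ((L + R) R, 1/sin\<^sup>2(\<pi> t))\<close>; Schur's test reduces it to row sums of this kernel over
  the spaced set, which are estimated unit window by unit window using
  \<open>sin (\<pi> s) \<ge> 9/5 min (s, 1 - s)\<close> and a telescoping bound for \<open>\<Sum> 1/j\<^sup>2\<close>.
\<close>

lemma e_cis: "e z = cis (2 * pi * z)"
  unfolding e_def cis_conv_exp by (simp add: mult_ac)

lemma norm_e [simp]: "norm (e z) = 1"
  by (simp add: e_cis)

lemma e_add: "e (a + b) = e a * e b"
  by (simp add: e_cis cis_mult distrib_left)

lemma e_mult_cnj: "e a * cnj (e b) = e (a - b)"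
  by (simp add: e_cis cis_cnj cis_mult right_diff_distrib)

lemma e_power: "e a ^ n = e (real n * a)"
proof -
  have "cis (2 * pi * a) ^ n = cis (real n * (2 * pi * a))" by (rule Complex.DeMoivre)
  then show ?thesis by (simp add: e_cis mult_ac)
qed

section \<open>Well-spaced sets of reals\<close>

text \<open>The separation part of \<open>delta_spaced\<close>, without finiteness or size conditions,
  so that it is inherited by subsets, translates and reflections.\<close>

definition spaced :: "real \<Rightarrow> real set \<Rightarrow> bool" where
  "spaced \<delta> T \<longleftrightarrow> (\<forall>t\<in>T. \<forall>t'\<in>T. t \<noteq> t' \<longrightarrow> \<bar>t - t'\<bar> \<ge> \<delta>)"

lemma spaced_subset: "spaced \<delta> T \<Longrightarrow> S \<subseteq> T \<Longrightarrow> spaced \<delta> S"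
  unfolding spaced_def by auto

lemma spaced_translate: "spaced \<delta> T \<Longrightarrow> spaced \<delta> ((\<lambda>t. t + c) ` T)"
  unfolding spaced_def by auto

lemma spaced_reflect: "spaced \<delta> T \<Longrightarrow> spaced \<delta> ((\<lambda>t. c - t) ` T)"
  unfolding spaced_def by (auto simp: abs_minus_commute)

text \<open>A \<open>\<delta>\<close>-spaced set in an interval of length \<open>b - a\<close> has at most \<open>(b - a)/\<delta> + 1\<close>
  points: the map \<open>t \<mapsto> \<lfloor>(t - a)/\<delta>\<rfloor>\<close> is injective on it.\<close>

lemma card_spaced_le:
  assumes "spaced \<delta> T" "\<delta> > 0" "T \<subseteq> {a..b}" "a \<le> b"
  shows "real (card T) \<le> (b - a) / \<delta> + 1"
proof -
  define f where "f t = nat \<lfloor>(t - a) / \<delta>\<rfloor>" for t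
  have "inj_on f T"
  proof (rule inj_onI, rule ccontr)
    fix t t' assume tt: "t \<in> T" "t' \<in> T" "f t = f t'" "t \<noteq> t'"
    have "t \<ge> a" "t' \<ge> a" using tt assms(3) by auto
    then have "\<lfloor>(t - a) / \<delta>\<rfloor> = \<lfloor>(t' - a) / \<delta>\<rfloor>"
      using tt(3) assms(2) unfolding f_def
      by (metis divide_nonneg_pos diff_ge_0_iff_ge eq_nat_nat_iff zero_le_floor)
    then have "\<bar>(t - a) / \<delta> - (t' - a) / \<delta>\<bar> < 1"
      by linarith
    then have "\<bar>t - t'\<bar> < \<delta>"
      using assms(2) by (simp add: diff_divide_distrib[symmetric] abs_divide divide_less_eq)
    moreover have "\<bar>t - t'\<bar> \<ge> \<delta>" using assms(1) tt unfolding spaced_def by auto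
    ultimately show False by simp
  qed
  moreover have "f ` T \<subseteq> {0..nat \<lfloor>(b - a) / \<delta>\<rfloor>}"
  proof
    fix n assume "n \<in> f ` T"
    then obtain t where t: "t \<in> T" "n = f t" by auto
    have "(t - a) / \<delta> \<le> (b - a) / \<delta>" using t assms by (intro divide_right_mono) auto
    then show "n \<in> {0..nat \<lfloor>(b - a) / \<delta>\<rfloor>}" unfolding t f_def
      by (simp add: floor_mono nat_mono)
  qed
  ultimately have "card T \<le> nat \<lfloor>(b - a) / \<delta>\<rfloor> + 1"
    using card_mono[of "{0..nat \<lfloor>(b - a) / \<delta>\<rfloor>}" "f ` T"] by (simp add: card_image)
  moreover have "real (nat \<lfloor>(b - a) / \<delta>\<rfloor>) \<le> (b - a) / \<delta>"
    using assms(2,4) by simp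
  ultimately show ?thesis by linarith
qed

lemma delta_spaced_le_diameter:
  assumes "delta_spaced \<delta> X" "X \<subseteq> {-P..P}"
  shows "\<delta> \<le> 2 * P"
proof -
  have "card X \<ge> 2" "finite X" using assms(1) unfolding delta_spaced_def by auto
  then obtain x1 x2 where "x1 \<in> X" "x2 \<in> X" "x1 \<noteq> x2"
    by (metis card_le_Suc_iff numeral_2_eq_2 insert_iff)
  moreover have "x1 \<in> {-P..P}" "x2 \<in> {-P..P}" using calculation assms(2) by auto
  ultimately have "\<bar>x1 - x2\<bar> \<ge> \<delta>" "\<bar>x1 - x2\<bar> \<le> 2 * P"
    using assms(1) unfolding delta_spaced_def by auto
  then show ?thesis by linarith
qed

section \<open>Sums of capped inverse squares over spaced points\<close>

text \<open>The profile \<open>u \<mapsto> min A (c/u\<^sup>2)\<close> on \<open>u > 0\<close>, capped by \<open>A\<close> at \<open>u \<le> 0\<close>; it dominates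
  the one-sided contributions to the kernel sums of the large sieve.\<close>

definition capped_inv_sq :: "real \<Rightarrow> real \<Rightarrow> real \<Rightarrow> real" where
  "capped_inv_sq A c u = (if u \<le> 0 then A else min A (c / u\<^sup>2))"

text \<open>The telescoping estimate \<open>1/k\<^sup>2 \<le> 2/k - 2/(k + 1)\<close>.\<close>

lemma inv_sq_le_telescope:
  fixes k :: real assumes "k \<ge> 1"
  shows "1 / k\<^sup>2 + (2 - 2 / k) \<le> 2 - 2 / (k + 1)"
proof -
  have k0: "k > 0" using assms by simp
  have "k * (k + 1) \<le> 2 * k\<^sup>2" using assms by (simp add: power2_eq_square algebra_simps)
  then have "1 / k\<^sup>2 \<le> 2 / (k * (k + 1))"
    using k0 by (simp add: divide_simps)
  moreover have "2 / k - 2 / (k + 1) = 2 / (k * (k + 1))"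
    using k0 by (simp add: divide_simps)
  ultimately show ?thesis by linarith
qed

text \<open>If \<open>T \<subseteq> [0, \<infinity>)\<close> is \<open>\<delta>\<close>-spaced with \<open>m + 1\<close> points, its largest point is at least
  \<open>m\<delta>\<close>; removing it and inducting gives \<open>A + (c/\<delta>\<^sup>2) \<Sum> 1/j\<^sup>2\<close>, bounded telescopically.\<close>

lemma sum_capped_inv_sq_card:
  assumes "\<delta> > 0" "A \<ge> 0" "c \<ge> 0"
    and "finite T" "card T = Suc m" "spaced \<delta> T" "T \<subseteq> {0..}"
  shows "(\<Sum>t\<in>T. capped_inv_sq A c t) \<le> A + c / \<delta>\<^sup>2 * (2 - 2 / real (Suc m))"
  using assms(4-)
proof (induction m arbitrary: T)
  case 0
  then obtain t where T: "T = {t}" by (auto simp: card_Suc_eq)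
  show ?case using assms by (simp add: T capped_inv_sq_def)
next
  case (Suc m)
  define t where "t = Max T"
  have tT: "t \<in> T" using Suc.prems unfolding t_def by (intro Max_in) auto
  have IH: "(\<Sum>t\<in>T - {t}. capped_inv_sq A c t) \<le> A + c / \<delta>\<^sup>2 * (2 - 2 / real (Suc m))"
    using Suc.prems tT by (intro Suc.IH) (auto intro: spaced_subset)
  have sub: "T \<subseteq> {0..t}" using Suc.prems unfolding t_def by auto
  have "real (card T) \<le> (t - 0) / \<delta> + 1"
    using tT sub Suc.prems by (intro card_spaced_le[OF _ assms(1)]) auto
  then have tge: "real (Suc m) * \<delta> \<le> t" using Suc.prems(2) assms(1)
    by (simp add: field_simps)
  moreover have pos: "real (Suc m) * \<delta> > 0" using assms(1) by simp
  ultimately have "t > 0" by linarith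
  then have "capped_inv_sq A c t \<le> c / t\<^sup>2"
    by (simp add: capped_inv_sq_def)
  also have "\<dots> \<le> c / (real (Suc m) * \<delta>)\<^sup>2"
    using tge pos assms(3) by (intro divide_left_mono power_mono mult_pos_pos) auto
  finally have top: "capped_inv_sq A c t \<le> c / \<delta>\<^sup>2 * (1 / (real (Suc m))\<^sup>2)"
    by (simp add: power_mult_distrib mult_ac)
  have "1 / (real (Suc m))\<^sup>2 + (2 - 2 / real (Suc m)) \<le> 2 - 2 / real (Suc (Suc m))"
    using inv_sq_le_telescope[of "real (Suc m)"] by simp
  then have tele: "c / \<delta>\<^sup>2 * (1 / (real (Suc m))\<^sup>2) + c / \<delta>\<^sup>2 * (2 - 2 / real (Suc m))
      \<le> c / \<delta>\<^sup>2 * (2 - 2 / real (Suc (Suc m)))"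
    unfolding distrib_left[symmetric] using assms(3) by (intro mult_left_mono) auto
  have "(\<Sum>t\<in>T. capped_inv_sq A c t) = capped_inv_sq A c t + (\<Sum>t\<in>T - {t}. capped_inv_sq A c t)"
    using Suc.prems tT by (simp add: sum.remove)
  also have "\<dots> \<le> A + c / \<delta>\<^sup>2 * (2 - 2 / real (Suc (Suc m)))"
    using top IH tele by linarith
  finally show ?case .
qed

lemma sum_capped_inv_sq:
  assumes "\<delta> > 0" "A \<ge> 0" "c \<ge> 0" "finite T" "spaced \<delta> T" "T \<subseteq> {0..}"
  shows "(\<Sum>t\<in>T. capped_inv_sq A c t) \<le> A + 2 * c / \<delta>\<^sup>2"
proof (cases "T = {}")
  case True then show ?thesis using assms by simp
next
  case False
  then obtain m where m: "card T = Suc m" using assms(4) by (metis card_0_eq not0_implies_Suc)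
  have "(\<Sum>t\<in>T. capped_inv_sq A c t) \<le> A + c / \<delta>\<^sup>2 * (2 - 2 / real (Suc m))"
    using sum_capped_inv_sq_card[OF assms(1-4) m assms(5,6)] .
  also have "\<dots> \<le> A + c / \<delta>\<^sup>2 * 2"
    using assms by (intro add_left_mono mult_left_mono) auto
  finally show ?thesis by (simp add: mult.commute)
qed

lemma sin_ge_cubic:
  fixes x :: real
  assumes "x \<ge> 0" shows "sin x \<ge> x - x ^ 3 / 6"
proof -
  have "\<bar>sin x - (\<Sum>m<3. sin_coeff m * x ^ m)\<bar> \<le> inverse (fact 3) * \<bar>x\<bar> ^ 3"
    by (rule Maclaurin_sin_bound)
  moreover have "inverse (fact 3) * \<bar>x\<bar> ^ 3 = x ^ 3 / 6"
    using assms by (simp add: numeral_3_eq_3 field_simps)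
  moreover have "(\<Sum>m<3. sin_coeff m * x ^ m) = x"
    by (simp add: numeral_3_eq_3 sin_coeff_def)
  ultimately show ?thesis by linarith
qed

lemma sin_pi_ge_half:
  assumes "0 \<le> s" "s \<le> 1/2" shows "sin (pi * s) \<ge> 9/5 * s"
proof -
  have "(6283/2000::real) \<le> 3.141592653588" "(3.1415926535899::real) \<le> 3927/1250" by simp_all
  then have p1: "pi \<ge> 6283/2000" and p2: "pi \<le> 3927/1250" using pi_approx by linarith+
  have "pi ^ 3 \<le> (3927/1250) ^ 3" using p2 by (intro power_mono) auto
  then have "pi ^ 3 \<le> 311/10" by (simp add: power3_eq_cube)
  moreover have "s\<^sup>2 \<le> 1/4" using power_mono[of s "1/2" 2] assms by (simp add: power_divide)
  ultimately have "pi ^ 3 * s\<^sup>2 \<le> 311/10 * (1/4)"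
    by (intro mult_mono) auto
  then have "pi ^ 3 * s\<^sup>2 * s \<le> 311/10 * (1/4) * s" using assms by (intro mult_right_mono) auto
  then have "(pi * s) ^ 3 / 6 \<le> 311/240 * s"
    by (simp add: power_mult_distrib power2_eq_square power3_eq_cube mult_ac)
  moreover have "sin (pi * s) \<ge> pi * s - (pi * s) ^ 3 / 6"
    using assms by (intro sin_ge_cubic) auto
  moreover have "pi * s \<ge> 6283/2000 * s" using p1 assms by (intro mult_right_mono) auto
  ultimately show ?thesis using assms by linarith
qed

lemma sin_pi_ge_dist:
  assumes "0 \<le> s" "s \<le> 1" shows "sin (pi * s) \<ge> 9/5 * min s (1 - s)"
proof (cases "s \<le> 1/2")
  case True
  then show ?thesis using sin_pi_ge_half[of s] assms by (simp add: min_def)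
next
  case False
  have "sin (pi * s) = sin (pi * (1 - s))"
    by (simp add: right_diff_distrib sin_diff)
  then show ?thesis using sin_pi_ge_half[of "1 - s"] False assms by (simp add: min_def)
qed

section \<open>The sine kernel\<close>

text \<open>It majorises
  products of Dirichlet sums of lengths whose product is \<open>Q\<close>.\<close>

definition sine_kernel :: "real \<Rightarrow> real \<Rightarrow> real" where
  "sine_kernel Q t = (if sin (pi * t) = 0 then Q else min Q (1 / (sin (pi * t))\<^sup>2))"

lemma sine_kernel_nonneg: "Q \<ge> 0 \<Longrightarrow> sine_kernel Q t \<ge> 0"
  unfolding sine_kernel_def by (simp add: min_def)

lemma sine_kernel_even: "sine_kernel Q (- t) = sine_kernel Q t"
  unfolding sine_kernel_def by simp

lemma sine_kernel_periodic: "sine_kernel Q (of_int n + t) = sine_kernel Q t"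
proof -
  have "sin (pi * (of_int n + t)) = cos (pi * of_int n) * sin (pi * t)"
    by (simp add: distrib_left sin_add)
  moreover have "(cos (pi * of_int n))\<^sup>2 = 1" by simp
  ultimately have "(sin (pi * (of_int n + t)))\<^sup>2 = (sin (pi * t))\<^sup>2"
    by (simp add: power_mult_distrib)
  then show ?thesis unfolding sine_kernel_def by (metis zero_eq_power2)
qed

text \<open>On \<open>[0, 1)\<close> the kernel is split into two one-sided profiles, one centred at \<open>0\<close>
  and one at \<open>1\<close>; this uses \<open>sin (\<pi> s) \<ge> 9/5 min s (1 - s)\<close>.\<close>

lemma sine_kernel_split:
  assumes "0 \<le> s" "s < 1" "Q \<ge> 0"
  shows "sine_kernel Q s \<le> capped_inv_sq Q (25/81) s + capped_inv_sq Q (25/81) (1 - s)"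
proof (cases "s = 0")
  case True
  then show ?thesis using assms by (simp add: sine_kernel_def capped_inv_sq_def)
next
  case False
  then have s0: "s > 0" using assms by simp
  have sin_pos: "sin (pi * s) > 0" using s0 assms by (intro sin_gt_zero) auto
  define m where "m = min s (1 - s)"
  have m0: "m > 0" using s0 assms by (simp add: m_def)
  have "9/5 * m \<le> sin (pi * s)" using sin_pi_ge_dist[of s] assms unfolding m_def by simp
  then have "(9/5 * m)\<^sup>2 \<le> (sin (pi * s))\<^sup>2" using m0 by (intro power_mono) auto
  then have "1 / (sin (pi * s))\<^sup>2 \<le> 1 / (9/5 * m)\<^sup>2" using m0
    by (intro divide_left_mono mult_pos_pos) auto
  also have "\<dots> = (25/81) / m\<^sup>2" using m0 by (simp add: field_simps power2_eq_square)
  also have "\<dots> \<le> (25/81) / s\<^sup>2 + (25/81) / (1 - s)\<^sup>2"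
    using s0 assms by (auto simp: m_def min_def)
  finally have "1 / (sin (pi * s))\<^sup>2 \<le> (25/81) / s\<^sup>2 + (25/81) / (1 - s)\<^sup>2" .
  moreover have "min Q z \<le> min Q u + min Q v" if "z \<le> u + v" "u \<ge> 0" "v \<ge> 0" for z u v
    using that assms(3) by (auto simp: min_def)
  ultimately have "min Q (1 / (sin (pi * s))\<^sup>2) \<le> min Q ((25/81) / s\<^sup>2) + min Q ((25/81) / (1 - s)\<^sup>2)"
    by simp
  then show ?thesis using sin_pos s0 assms by (simp add: sine_kernel_def capped_inv_sq_def)
qed

lemma sine_kernel_sum_unit_window:
  assumes "\<delta> > 0" "Q \<ge> 0" "finite T" "spaced \<delta> T" "T \<subseteq> {b..<b + 1}"
  shows "(\<Sum>t\<in>T. sine_kernel Q (t - b)) \<le> 2 * (Q + 2 * (25/81) / \<delta>\<^sup>2)"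
proof -
  define g where "g = capped_inv_sq Q (25/81)"
  have "(\<Sum>t\<in>T. sine_kernel Q (t - b)) \<le> (\<Sum>t\<in>T. g (t - b) + g (b + 1 - t))"
  proof (rule sum_mono)
    fix t assume "t \<in> T"
    then have "0 \<le> t - b" "t - b < 1" using assms(5) by auto
    moreover have "b + 1 - t = 1 - (t - b)" by simp
    ultimately show "sine_kernel Q (t - b) \<le> g (t - b) + g (b + 1 - t)"
      using sine_kernel_split[OF _ _ assms(2)] unfolding g_def by presburger
  qed
  also have "\<dots> = (\<Sum>u\<in>(\<lambda>t. t + - b) ` T. g u) + (\<Sum>u\<in>(\<lambda>t. (b + 1) - t) ` T. g u)"
    by (simp add: sum.distrib sum.reindex inj_on_def)
  also have "\<dots> \<le> (Q + 2 * (25/81) / \<delta>\<^sup>2) + (Q + 2 * (25/81) / \<delta>\<^sup>2)"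
    using assms unfolding g_def
    by (intro add_mono sum_capped_inv_sq spaced_translate spaced_reflect) auto
  finally show ?thesis by simp
qed

lemma card_floor_image_le:
  assumes "T \<subseteq> {a..b}" "a \<le> b"
  shows "real (card (floor ` T)) \<le> b - a + 2"
proof -
  have "floor ` T \<subseteq> {\<lfloor>a\<rfloor>..\<lfloor>b\<rfloor>}"
    using assms(1) by (fastforce intro: floor_mono)
  then have "card (floor ` T) \<le> card {\<lfloor>a\<rfloor>..\<lfloor>b\<rfloor>}" by (intro card_mono) auto
  moreover have "\<lfloor>a\<rfloor> \<le> \<lfloor>b\<rfloor>" using assms(2) by (rule floor_mono)
  ultimately have "real (card (floor ` T)) \<le> real_of_int \<lfloor>b\<rfloor> + 1 - real_of_int \<lfloor>a\<rfloor>"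
    by simp
  moreover have "real_of_int \<lfloor>b\<rfloor> \<le> b" "a < real_of_int \<lfloor>a\<rfloor> + 1"
    by linarith+
  ultimately show ?thesis by linarith
qed

text \<open>Row sums of the kernel matrix \<open>(sine_kernel Q (x' - x))\<close> over a spaced set in \<open>[-P, P]\<close>:
  cut \<open>X\<close> into unit windows relative to \<open>x\<close> and use periodicity.\<close>

lemma sine_kernel_row_sum:
  assumes "\<delta> > 0" "Q \<ge> 0" "P \<ge> 0" "finite X" "spaced \<delta> X" "X \<subseteq> {-P..P}"
  shows "(\<Sum>x'\<in>X. sine_kernel Q (x' - x)) \<le> (2 * P + 2) * (2 * (Q + 2 * (25/81) / \<delta>\<^sup>2))"
proof -
  define M where "M = 2 * (Q + 2 * (25/81) / \<delta>\<^sup>2)"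
  define W where "W = (\<lambda>x'. \<lfloor>x' - x\<rfloor>) ` X"
  have window: "(\<Sum>x'\<in>{x'\<in>X. \<lfloor>x' - x\<rfloor> = n}. sine_kernel Q (x' - x)) \<le> M" for n
  proof -
    have shift: "sine_kernel Q (x' - x) = sine_kernel Q (x' - (x + of_int n))" for x'
      using sine_kernel_periodic[of Q n "x' - (x + of_int n)"] by simp
    have "{x'\<in>X. \<lfloor>x' - x\<rfloor> = n} \<subseteq> {x + of_int n..<x + of_int n + 1}"
      by (auto simp: floor_eq_iff)
    then have "(\<Sum>x'\<in>{x'\<in>X. \<lfloor>x' - x\<rfloor> = n}. sine_kernel Q (x' - (x + of_int n))) \<le> M"
      unfolding M_def using assms by (intro sine_kernel_sum_unit_window) (auto intro: spaced_subset)
    then show ?thesis by (simp only: shift)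
  qed
  have "(\<Sum>x'\<in>X. sine_kernel Q (x' - x))
      = (\<Sum>n\<in>W. \<Sum>x'\<in>{x'\<in>X. \<lfloor>x' - x\<rfloor> = n}. sine_kernel Q (x' - x))"
    unfolding W_def by (rule sum.image_gen[OF assms(4)])
  also have "\<dots> \<le> real (card W) * M" by (rule sum_bounded_above) (rule window)
  also have "\<dots> \<le> (2 * P + 2) * M"
  proof (rule mult_right_mono)
    have "W = floor ` (\<lambda>x'. x' - x) ` X" unfolding W_def by (simp add: image_image)
    moreover have "(\<lambda>x'. x' - x) ` X \<subseteq> {-P - x..P - x}" using assms(6) by auto
    ultimately show "real (card W) \<le> 2 * P + 2"
      using card_floor_image_le[of _ "-P - x" "P - x"] assms(3) by simp
  qed (use assms in \<open>simp add: M_def\<close>)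
  finally show ?thesis unfolding M_def .
qed

section \<open>Dirichlet sums\<close>

definition dirichlet :: "nat \<Rightarrow> real \<Rightarrow> complex" where
  "dirichlet n t = (\<Sum>j<n. e (real j * t))"

lemma norm_dirichlet_le: "norm (dirichlet n t) \<le> real n"
proof -
  have "norm (dirichlet n t) \<le> (\<Sum>j<n. norm (e (real j * t)))"
    unfolding dirichlet_def by (rule norm_sum)
  then show ?thesis by simp
qed

lemma norm_e_minus_one: "norm (e t - 1) = 2 * \<bar>sin (pi * t)\<bar>"
proof -
  have "(norm (e t - 1))\<^sup>2 = (cos (2 * (pi * t)) - 1)\<^sup>2 + (sin (2 * (pi * t)))\<^sup>2"
    by (simp add: e_cis cmod_power2 mult_ac)
  also have "\<dots> = 2 - 2 * cos (2 * (pi * t))"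
    using sin_cos_squared_add[of "2 * (pi * t)"] by (simp add: power2_eq_square algebra_simps)
  also have "\<dots> = (2 * \<bar>sin (pi * t)\<bar>)\<^sup>2"
    by (simp add: cos_double_sin power_mult_distrib)
  finally have "(norm (e t - 1))\<^sup>2 = (2 * \<bar>sin (pi * t)\<bar>)\<^sup>2" .
  then show ?thesis by (subst (asm) power2_eq_iff_nonneg) auto
qed

text \<open>The geometric-series bound \<open>|D_n(t)| \<le> 1 / |sin (\<pi> t)|\<close>.\<close>

lemma norm_dirichlet_sin_le: "norm (dirichlet n t) * \<bar>sin (pi * t)\<bar> \<le> 1"
proof -
  have "dirichlet n t = (\<Sum>j<n. e t ^ j)" unfolding dirichlet_def by (simp add: e_power)
  then have "e t ^ n - 1 = (e t - 1) * dirichlet n t" by (simp add: power_diff_1_eq)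
  then have "norm (e t - 1) * norm (dirichlet n t) = norm (e t ^ n - 1)" by (simp add: norm_mult)
  also have "\<dots> \<le> norm (e t ^ n) + norm (1::complex)" by (rule norm_triangle_ineq4)
  also have "\<dots> = 2" by (simp add: norm_power)
  finally show ?thesis unfolding norm_e_minus_one by (simp add: mult_ac)
qed

lemma dirichlet_product_le_kernel:
  "norm (dirichlet a t) * norm (dirichlet b (- t)) \<le> sine_kernel (real a * real b) t"
proof -
  have trivial: "norm (dirichlet a t) * norm (dirichlet b (- t)) \<le> real a * real b"
    by (intro mult_mono norm_dirichlet_le) auto
  show ?thesis
  proof (cases "sin (pi * t) = 0")
    case True then show ?thesis using trivial by (simp add: sine_kernel_def)
  next
    case False
    then have pos: "\<bar>sin (pi * t)\<bar> > 0" by simp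
    have "norm (dirichlet a t) \<le> 1 / \<bar>sin (pi * t)\<bar>"
      using norm_dirichlet_sin_le[of a t] pos by (simp add: le_divide_eq)
    moreover have "norm (dirichlet b (- t)) \<le> 1 / \<bar>sin (pi * t)\<bar>"
      using norm_dirichlet_sin_le[of b "- t"] pos by (simp add: le_divide_eq)
    ultimately have "norm (dirichlet a t) * norm (dirichlet b (- t)) \<le> 1 / \<bar>sin (pi * t)\<bar> * (1 / \<bar>sin (pi * t)\<bar>)"
      by (intro mult_mono) auto
    also have "\<dots> = 1 / (sin (pi * t))\<^sup>2" by (simp add: power2_eq_square)
    finally show ?thesis using trivial False by (simp add: sine_kernel_def)
  qed
qed

lemma sum_e_consecutive:
  "(\<Sum>u\<in>(\<lambda>j. k0 + int j) ` {..<n}. e (t * of_int u)) = e (t * of_int k0) * dirichlet n t"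
proof -
  have "(\<Sum>u\<in>(\<lambda>j. k0 + int j) ` {..<n}. e (t * of_int u)) = (\<Sum>j<n. e (t * of_int k0) * e (real j * t))"
    by (simp add: sum.reindex inj_on_def e_add[symmetric] algebra_simps)
  then show ?thesis unfolding dirichlet_def by (simp add: sum_distrib_left)
qed

lemma sum_e_consecutive_neg:
  "(\<Sum>v\<in>int ` {..<n}. e (- (t * of_int v))) = dirichlet n (- t)"
  unfolding dirichlet_def by (simp add: sum.reindex inj_on_def mult_ac)

text \<open>A symmetric nonnegative kernel with row sums at most \<open>M\<close> defines a quadratic form
  bounded by \<open>M\<close> times the squared \<open>\<ell>\<^sup>2\<close>-norm (by \<open>a b \<le> (a\<^sup>2 + b\<^sup>2)/2\<close>).\<close>

lemma schur_test:
  fixes a :: "real \<Rightarrow> real" and H :: "real \<Rightarrow> real"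
  assumes "\<And>x. x \<in> X \<Longrightarrow> (\<Sum>x'\<in>X. H (x' - x)) \<le> M"
    and "\<And>t. H (- t) = H t" and "\<And>t. H t \<ge> 0"
  shows "(\<Sum>x\<in>X. \<Sum>x'\<in>X. a x * a x' * H (x' - x)) \<le> M * (\<Sum>x\<in>X. (a x)\<^sup>2)"
proof -
  have "(\<Sum>x\<in>X. \<Sum>x'\<in>X. a x * a x' * H (x' - x))
      \<le> (\<Sum>x\<in>X. \<Sum>x'\<in>X. (a x)\<^sup>2 / 2 * H (x' - x) + (a x')\<^sup>2 / 2 * H (x' - x))"
  proof (intro sum_mono)
    fix x x'
    have "a x * a x' \<le> (a x)\<^sup>2 / 2 + (a x')\<^sup>2 / 2"
      using sum_squares_bound[of "a x" "a x'"] by (simp add: mult.assoc)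
    then have "a x * a x' * H (x' - x) \<le> ((a x)\<^sup>2 / 2 + (a x')\<^sup>2 / 2) * H (x' - x)"
      using assms(3) by (intro mult_right_mono) auto
    then show "a x * a x' * H (x' - x) \<le> (a x)\<^sup>2 / 2 * H (x' - x) + (a x')\<^sup>2 / 2 * H (x' - x)"
      by (simp add: algebra_simps)
  qed
  also have "\<dots> = 2 * (\<Sum>x\<in>X. (a x)\<^sup>2 / 2 * (\<Sum>x'\<in>X. H (x' - x)))"
  proof -
    have "(\<Sum>x\<in>X. \<Sum>x'\<in>X. (a x')\<^sup>2 / 2 * H (x' - x)) = (\<Sum>x\<in>X. \<Sum>x'\<in>X. (a x)\<^sup>2 / 2 * H (x - x'))"
      by (rule sum.swap)
    also have "\<dots> = (\<Sum>x\<in>X. \<Sum>x'\<in>X. (a x)\<^sup>2 / 2 * H (x' - x))"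
      by (intro sum.cong refl) (metis assms(2) minus_diff_eq)
    finally show ?thesis by (simp add: sum.distrib sum_distrib_left)
  qed
  also have "\<dots> \<le> 2 * (\<Sum>x\<in>X. (a x)\<^sup>2 / 2 * M)"
    using assms(1) by (intro mult_left_mono sum_mono) auto
  also have "\<dots> = M * (\<Sum>x\<in>X. (a x)\<^sup>2)"
    by (simp add: sum_distrib_left mult_ac)
  finally show ?thesis .
qed

section \<open>The dual large sieve inequality\<close>

definition dual_sum :: "(real \<Rightarrow> complex) \<Rightarrow> real set \<Rightarrow> int \<Rightarrow> complex" where
  "dual_sum \<beta> X k = (\<Sum>x\<in>X. \<beta> x * e (x * of_int k))"

lemma norm_dual_sum_sq:
  "complex_of_real ((cmod (dual_sum \<beta> X k))\<^sup>2) =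
   (\<Sum>x\<in>X. \<Sum>x'\<in>X. \<beta> x * cnj (\<beta> x') * e ((x - x') * of_int k))"
proof -
  have "complex_of_real ((cmod (dual_sum \<beta> X k))\<^sup>2) = dual_sum \<beta> X k * cnj (dual_sum \<beta> X k)"
    by (rule complex_norm_square)
  also have "\<dots> = (\<Sum>x\<in>X. \<Sum>x'\<in>X. (\<beta> x * e (x * of_int k)) * cnj (\<beta> x' * e (x' * of_int k)))"
    unfolding dual_sum_def cnj_sum by (rule sum_product)
  also have "\<dots> = (\<Sum>x\<in>X. \<Sum>x'\<in>X. \<beta> x * cnj (\<beta> x') * e ((x - x') * of_int k))"
  proof (intro sum.cong refl)
    fix x x'
    have "e (x * of_int k) * cnj (e (x' * of_int k)) = e ((x - x') * of_int k)"
      by (simp add: e_mult_cnj left_diff_distrib)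
    then show "(\<beta> x * e (x * of_int k)) * cnj (\<beta> x' * e (x' * of_int k))
        = \<beta> x * cnj (\<beta> x') * e ((x - x') * of_int k)"
      by (simp add: mult_ac)
  qed
  finally show ?thesis .
qed

lemma sum_le_shift_average:
  fixes h :: "int \<Rightarrow> real"
  assumes "\<And>k. h k \<ge> 0" "K \<subseteq> {k0..k0 + int L}"
  shows "real R * (\<Sum>k\<in>K. h k) \<le> (\<Sum>v\<in>int ` {..<R}. \<Sum>u\<in>(\<lambda>j. k0 + int j) ` {..<L + R}. h (u - v))"
proof -
  define U where "U = (\<lambda>j. k0 + int j) ` {..<L + R}"
  have shift: "(\<Sum>k\<in>K. h k) \<le> (\<Sum>u\<in>U. h (u - v))" if v: "v \<in> int ` {..<R}" for v
  proof -
    have "(\<lambda>k. k + v) ` K \<subseteq> U"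
    proof
      fix u assume "u \<in> (\<lambda>k. k + v) ` K"
      then obtain k where k: "k \<in> K" "u = k + v" by auto
      then have "k0 \<le> k" "k \<le> k0 + int L" using assms(2) by auto
      moreover obtain j where "j < R" "v = int j" using v by auto
      ultimately have "u = k0 + int (nat (u - k0))" "nat (u - k0) < L + R"
        using k by linarith+
      then show "u \<in> U" unfolding U_def by blast
    qed
    then have "(\<Sum>u\<in>(\<lambda>k. k + v) ` K. h (u - v)) \<le> (\<Sum>u\<in>U. h (u - v))"
      using assms(1) by (intro sum_mono2) (auto simp: U_def)
    then show ?thesis by (simp add: sum.reindex inj_on_def)
  qed
  have "real R * (\<Sum>k\<in>K. h k) = (\<Sum>v\<in>int ` {..<R}. \<Sum>k\<in>K. h k)"
    by (simp add: card_image)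
  also have "\<dots> \<le> (\<Sum>v\<in>int ` {..<R}. \<Sum>u\<in>U. h (u - v))"
    by (rule sum_mono) (rule shift)
  finally show ?thesis unfolding U_def .
qed

lemma sum_swap_nested:
  "(\<Sum>a\<in>A. \<Sum>b\<in>B. \<Sum>c\<in>C. \<Sum>d\<in>D. f a b c d) = (\<Sum>c\<in>C. \<Sum>d\<in>D. \<Sum>a\<in>A. \<Sum>b\<in>B. f a b c d)"
proof -
  have "(\<Sum>a\<in>A. \<Sum>b\<in>B. \<Sum>c\<in>C. \<Sum>d\<in>D. f a b c d) = (\<Sum>a\<in>A. \<Sum>c\<in>C. \<Sum>b\<in>B. \<Sum>d\<in>D. f a b c d)"
    by (rule sum.cong[OF refl], rule sum.swap)
  also have "\<dots> = (\<Sum>a\<in>A. \<Sum>c\<in>C. \<Sum>d\<in>D. \<Sum>b\<in>B. f a b c d)"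
    by (rule sum.cong[OF refl], rule sum.cong[OF refl], rule sum.swap)
  also have "\<dots> = (\<Sum>c\<in>C. \<Sum>a\<in>A. \<Sum>d\<in>D. \<Sum>b\<in>B. f a b c d)"
    by (rule sum.swap)
  also have "\<dots> = (\<Sum>c\<in>C. \<Sum>d\<in>D. \<Sum>a\<in>A. \<Sum>b\<in>B. f a b c d)"
    by (rule sum.cong[OF refl], rule sum.swap)
  finally show ?thesis .
qed

text \<open>Expanding the shifted sums of \<open>|B|\<^sup>2\<close> separates the variables: the frequencies enter
  only through two exponential sums over \<open>U\<close> and \<open>V\<close>.\<close>

lemma shifted_dual_sum_expansion:
  "complex_of_real (\<Sum>v\<in>V. \<Sum>u\<in>U. (cmod (dual_sum \<beta> X (u - v)))\<^sup>2)
   = (\<Sum>x\<in>X. \<Sum>x'\<in>X. \<beta> x * cnj (\<beta> x') *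
        ((\<Sum>u\<in>U. e ((x - x') * of_int u)) * (\<Sum>v\<in>V. e (- ((x - x') * of_int v)))))"
proof -
  have "complex_of_real (\<Sum>v\<in>V. \<Sum>u\<in>U. (cmod (dual_sum \<beta> X (u - v)))\<^sup>2)
      = (\<Sum>v\<in>V. \<Sum>u\<in>U. \<Sum>x\<in>X. \<Sum>x'\<in>X. \<beta> x * cnj (\<beta> x') * e ((x - x') * of_int (u - v)))"
    by (simp only: of_real_sum norm_dual_sum_sq)
  also have "\<dots> = (\<Sum>x\<in>X. \<Sum>x'\<in>X. \<Sum>v\<in>V. \<Sum>u\<in>U. \<beta> x * cnj (\<beta> x') * e ((x - x') * of_int (u - v)))"
    by (rule sum_swap_nested)
  also have "\<dots> = (\<Sum>x\<in>X. \<Sum>x'\<in>X. \<beta> x * cnj (\<beta> x') *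
        ((\<Sum>u\<in>U. e ((x - x') * of_int u)) * (\<Sum>v\<in>V. e (- ((x - x') * of_int v)))))"
  proof (intro sum.cong refl)
    fix x x'
    have "(\<Sum>u\<in>U. e ((x - x') * of_int u)) * (\<Sum>v\<in>V. e (- ((x - x') * of_int v)))
        = (\<Sum>v\<in>V. \<Sum>u\<in>U. e ((x - x') * of_int u) * e (- ((x - x') * of_int v)))"
      unfolding sum_product by (rule sum.swap)
    also have "\<dots> = (\<Sum>v\<in>V. \<Sum>u\<in>U. e ((x - x') * of_int (u - v)))"
      by (intro sum.cong refl) (simp add: e_add[symmetric] algebra_simps)
    finally show "(\<Sum>v\<in>V. \<Sum>u\<in>U. \<beta> x * cnj (\<beta> x') * e ((x - x') * of_int (u - v)))
        = \<beta> x * cnj (\<beta> x') * ((\<Sum>u\<in>U. e ((x - x') * of_int u)) * (\<Sum>v\<in>V. e (- ((x - x') * of_int v))))"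
      by (simp add: sum_distrib_left)
  qed
  finally show ?thesis .
qed

lemma consecutive_sums_le_kernel:
  "cmod (\<Sum>u\<in>(\<lambda>j. k0 + int j) ` {..<N}. e (t * of_int u)) * cmod (\<Sum>v\<in>int ` {..<R}. e (- (t * of_int v)))
   \<le> sine_kernel (real N * real R) t"
  unfolding sum_e_consecutive sum_e_consecutive_neg
  using dirichlet_product_le_kernel[of N t R] by (simp add: norm_mult)

text \<open>The dual inequality with an auxiliary shift length \<open>R\<close>: the quadratic form arising from
  the shifted sums has kernel at most \<open>sine_kernel ((L + R) R)\<close>, and Schur's test applies.\<close>

lemma dual_large_sieve_shifted:
  assumes "\<delta> > 0" "finite X" "spaced \<delta> X" "X \<subseteq> {-P..P}" "P \<ge> 0" "K \<subseteq> {k0..k0 + int L}"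
  shows "real R * (\<Sum>k\<in>K. (cmod (dual_sum \<beta> X k))\<^sup>2)
    \<le> (2 * P + 2) * (2 * (real (L + R) * real R + 2 * (25/81) / \<delta>\<^sup>2)) * (\<Sum>x\<in>X. (cmod (\<beta> x))\<^sup>2)"
proof -
  define Q where "Q = real (L + R) * real R"
  define U where "U = (\<lambda>j. k0 + int j) ` {..<L + R}"
  define V where "V = int ` {..<R}"
  define SU where "SU t = (\<Sum>u\<in>U. e (t * of_int u))" for t
  define SV where "SV t = (\<Sum>v\<in>V. e (- (t * of_int v)))" for t
  define Z where "Z = (\<Sum>v\<in>V. \<Sum>u\<in>U. (cmod (dual_sum \<beta> X (u - v)))\<^sup>2)"
  have Q0: "Q \<ge> 0" unfolding Q_def by simp
  have "real R * (\<Sum>k\<in>K. (cmod (dual_sum \<beta> X k))\<^sup>2) \<le> Z"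
    unfolding Z_def U_def V_def using assms(6) by (intro sum_le_shift_average) auto
  also have "Z \<ge> 0" unfolding Z_def by (simp add: sum_nonneg)
  then have "Z = cmod (complex_of_real Z)" by simp
  also have "\<dots> = cmod (\<Sum>x\<in>X. \<Sum>x'\<in>X. \<beta> x * cnj (\<beta> x') * (SU (x - x') * SV (x - x')))"
    unfolding Z_def SU_def SV_def by (simp only: shifted_dual_sum_expansion)
  also have "\<dots> \<le> (\<Sum>x\<in>X. \<Sum>x'\<in>X. cmod (\<beta> x) * cmod (\<beta> x') * sine_kernel Q (x' - x))"
  proof -
    have "cmod (\<beta> x * cnj (\<beta> x') * (SU (x - x') * SV (x - x')))
        \<le> cmod (\<beta> x) * cmod (\<beta> x') * sine_kernel Q (x' - x)" for x x'
    proof -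
      have "cmod (SU (x - x')) * cmod (SV (x - x')) \<le> sine_kernel Q (x - x')"
        unfolding SU_def SV_def U_def V_def Q_def by (rule consecutive_sums_le_kernel)
      also have "\<dots> = sine_kernel Q (x' - x)"
        using sine_kernel_even[of Q "x' - x"] by simp
      finally show ?thesis by (simp add: norm_mult mult_left_mono)
    qed
    then show ?thesis
      by (intro order_trans[OF norm_sum] sum_mono order_trans[OF norm_sum]) auto
  qed
  also have "\<dots> \<le> (2 * P + 2) * (2 * (Q + 2 * (25/81) / \<delta>\<^sup>2)) * (\<Sum>x\<in>X. (cmod (\<beta> x))\<^sup>2)"
    using assms Q0
    by (intro schur_test sine_kernel_row_sum sine_kernel_even sine_kernel_nonneg) auto
  finally show ?thesis unfolding Q_def .
qed

lemma shift_constant_le: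
  fixes L r :: real
  assumes "\<delta> > 0" "\<delta> < 1/2" "1 / \<delta> \<le> r" "r \<le> 1 / \<delta> + 1"
  shows "2 * ((L + r) * r + 2 * (25/81) / \<delta>\<^sup>2) \<le> r * (2 * L + 9/2 / \<delta>)"
proof -
  have r0: "r > 0" using assms(3) divide_pos_pos[OF zero_less_one assms(1)] by linarith
  have "r \<le> 3/2 * (1 / \<delta>)" using assms by (simp add: field_simps)
  then have "r * r \<le> r * (3/2 * (1 / \<delta>))" using r0 by (intro mult_left_mono) auto
  then have a: "2 * (r * r) \<le> 3 * (r / \<delta>)" by simp
  have "1 / \<delta> * (1 / \<delta>) \<le> r * (1 / \<delta>)" using assms by (intro mult_right_mono) auto
  then have b: "1 / \<delta>\<^sup>2 \<le> r / \<delta>" by (simp add: power2_eq_square)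
  have "2 * ((L + r) * r + 2 * (25/81) / \<delta>\<^sup>2) = 2 * L * r + 2 * (r * r) + 100/81 * (1 / \<delta>\<^sup>2)"
    by (simp add: algebra_simps)
  also have "\<dots> \<le> 2 * L * r + 3 * (r / \<delta>) + 100/81 * (r / \<delta>)"
    using a b by linarith
  also have "\<dots> \<le> r * (2 * L + 9/2 / \<delta>)"
    using assms(1) r0 by (simp add: algebra_simps divide_simps)
  finally show ?thesis .
qed

lemma dual_large_sieve:
  assumes "\<delta> > 0" "\<delta> < 1/2" "finite X" "spaced \<delta> X" "X \<subseteq> {-P..P}" "P \<ge> 0"
    and "K \<subseteq> {k0..k0 + int L}"
  shows "(\<Sum>k\<in>K. (cmod (dual_sum \<beta> X k))\<^sup>2)
    \<le> (2 * P + 2) * (2 * real L + 9/2 / \<delta>) * (\<Sum>x\<in>X. (cmod (\<beta> x))\<^sup>2)"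
proof -
  define R where "R = nat \<lceil>1 / \<delta>\<rceil>"
  have R_ge: "1 / \<delta> \<le> real R" unfolding R_def by linarith
  have R_le: "real R \<le> 1 / \<delta> + 1"
    using assms(1) ceiling_correct[of "1 / \<delta>"] unfolding R_def by simp
  have R_pos: "real R > 0" using R_ge divide_pos_pos[OF zero_less_one assms(1)] by linarith
  have "real R * (\<Sum>k\<in>K. (cmod (dual_sum \<beta> X k))\<^sup>2)
    \<le> (2 * P + 2) * (2 * (real (L + R) * real R + 2 * (25/81) / \<delta>\<^sup>2)) * (\<Sum>x\<in>X. (cmod (\<beta> x))\<^sup>2)"
    using assms by (intro dual_large_sieve_shifted) auto
  also have "\<dots> \<le> (2 * P + 2) * (real R * (2 * real L + 9/2 / \<delta>)) * (\<Sum>x\<in>X. (cmod (\<beta> x))\<^sup>2)"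
    using shift_constant_le[OF assms(1,2) R_ge R_le, of "real L"] assms(6)
    by (intro mult_right_mono mult_left_mono) (auto intro: sum_nonneg)
  also have "\<dots> = real R * ((2 * P + 2) * (2 * real L + 9/2 / \<delta>) * (\<Sum>x\<in>X. (cmod (\<beta> x))\<^sup>2))"
    by (simp add: mult_ac)
  finally show ?thesis using R_pos by simp
qed

section \<open>The large sieve inequality\<close>

text \<open>Take \<open>\<beta> = conj f\<close>; then \<open>\<Sum>|f|\<^sup>2 = \<Sum>\<^sub>k c(k) B(k)\<close> and
  Cauchy--Schwarz gives \<open>(\<Sum>|f|\<^sup>2)\<^sup>2 \<le> \<Sum>|c|\<^sup>2 \<cdot> C \<Sum>|f|\<^sup>2\<close>.\<close>

lemma large_sieve_from_dual:
  fixes c :: "int \<Rightarrow> complex"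
  assumes "C \<ge> 0"
    and dual: "\<And>\<beta>. (\<Sum>k\<in>K. (cmod (dual_sum \<beta> X k))\<^sup>2) \<le> C * (\<Sum>x\<in>X. (cmod (\<beta> x))\<^sup>2)"
  shows "(\<Sum>x\<in>X. (cmod (\<Sum>k\<in>K. c k * e (x * of_int k)))\<^sup>2) \<le> C * (\<Sum>k\<in>K. (cmod (c k))\<^sup>2)"
proof -
  define f where "f x = (\<Sum>k\<in>K. c k * e (x * of_int k))" for x
  define B where "B = dual_sum (\<lambda>x. cnj (f x)) X"
  define S where "S = (\<Sum>x\<in>X. (cmod (f x))\<^sup>2)"
  define SC where "SC = (\<Sum>k\<in>K. (cmod (c k))\<^sup>2)"
  have S0: "S \<ge> 0" and SC0: "SC \<ge> 0" unfolding S_def SC_def by (auto intro: sum_nonneg)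
  have SB: "(\<Sum>k\<in>K. (cmod (B k))\<^sup>2) \<le> C * S"
    using dual[of "\<lambda>x. cnj (f x)"] unfolding B_def S_def by simp
  have "complex_of_real S = (\<Sum>x\<in>X. f x * cnj (f x))"
    unfolding S_def of_real_sum by (intro sum.cong refl complex_norm_square)
  also have "\<dots> = (\<Sum>x\<in>X. \<Sum>k\<in>K. c k * (cnj (f x) * e (x * of_int k)))"
    unfolding f_def[of x for x] sum_distrib_right by (intro sum.cong refl) (simp add: mult_ac)
  also have "\<dots> = (\<Sum>k\<in>K. c k * B k)"
    unfolding B_def dual_sum_def by (subst sum.swap) (simp only: sum_distrib_left)
  finally have "S = cmod (\<Sum>k\<in>K. c k * B k)" using S0 by (metis abs_of_nonneg norm_of_real)
  also have "\<dots> \<le> (\<Sum>k\<in>K. cmod (c k) * cmod (B k))"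
    using norm_sum[of "\<lambda>k. c k * B k" K] by (simp add: norm_mult)
  finally have "S\<^sup>2 \<le> (\<Sum>k\<in>K. cmod (c k) * cmod (B k))\<^sup>2"
    using S0 by (simp add: power_mono)
  also have "\<dots> \<le> SC * (\<Sum>k\<in>K. (cmod (B k))\<^sup>2)"
    unfolding SC_def by (rule Cauchy_Schwarz_ineq_sum)
  also have "\<dots> \<le> SC * (C * S)" using SB SC0 by (rule mult_left_mono)
  finally have "S * S \<le> (C * SC) * S" by (simp add: power2_eq_square mult_ac)
  then have "S \<le> C * SC"
    using S0 assms(1) SC0 by (cases "S = 0") auto
  then show ?thesis unfolding S_def f_def SC_def .
qed

lemma trig_poly_sq_le:
  "(cmod (\<Sum>k\<in>K. c k * e (x * of_int k)))\<^sup>2 \<le> real (card K) * (\<Sum>k\<in>K. (cmod (c k))\<^sup>2)"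
proof -
  have "cmod (\<Sum>k\<in>K. c k * e (x * of_int k)) \<le> (\<Sum>k\<in>K. cmod (c k))"
    using norm_sum[of "\<lambda>k. c k * e (x * of_int k)" K] by (simp add: norm_mult)
  then have "(cmod (\<Sum>k\<in>K. c k * e (x * of_int k)))\<^sup>2 \<le> (\<Sum>k\<in>K. cmod (c k))\<^sup>2"
    by (intro power_mono) auto
  also have "\<dots> \<le> real (card K) * (\<Sum>k\<in>K. (cmod (c k))\<^sup>2)"
    using sum_squared_le_sum_of_squares[of "\<lambda>k. cmod (c k)" K] by (simp add: mult.commute)
  finally show ?thesis .
qed

text \<open>For \<open>\<delta> \<ge> 1/2\<close> the trivial bound already gives the large sieve constant.\<close>

lemma sparse_constant_le:
  fixes L :: real
  assumes "1/2 \<le> \<delta>" "\<delta> \<le> 2 * P" "L \<ge> 0"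
  shows "(2 * P / \<delta> + 1) * (L + 1) \<le> 9 * (P + 2) * (L / 2 + 1 / \<delta>)"
proof -
  have d: "\<delta> > 0" and P0: "P > 0" using assms by auto
  have "1 / \<delta> \<le> 2" using assms(1) d by (simp add: field_simps)
  then have "P * L * (1 / \<delta>) \<le> P * L * 2" using P0 assms(3) by (intro mult_left_mono) auto
  moreover have "1 \<le> 2 * (P / \<delta>)" using assms(2) d by (simp add: field_simps)
  moreover have "0 \<le> P * L" "0 \<le> P / \<delta>" "0 \<le> 1 / \<delta>" using P0 d assms(3) by auto
  ultimately have le: "2 * (P * L * (1 / \<delta>)) + 2 * (P / \<delta>) + L + 1
      \<le> 9/2 * (P * L) + 9 * L + 9 * (P / \<delta>) + 18 * (1 / \<delta>)"
    using assms(3) by linarith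
  have "(2 * P / \<delta> + 1) * (L + 1) = 2 * (P * L * (1 / \<delta>)) + 2 * (P / \<delta>) + L + 1"
    using d by (simp add: field_simps)
  also have "\<dots> \<le> 9/2 * (P * L) + 9 * L + 9 * (P / \<delta>) + 18 * (1 / \<delta>)" by (rule le)
  also have "\<dots> = 9 * (P + 2) * (L / 2 + 1 / \<delta>)"
    using d by (simp add: field_simps)
  finally show ?thesis .
qed

theorem large_sieve:
  fixes c :: "int \<Rightarrow> complex"
  assumes "\<delta> > 0" "finite X" "spaced \<delta> X" "X \<subseteq> {-P..P}" "\<delta> \<le> 2 * P"
    and "K \<subseteq> {k0..k0 + int L}"
  shows "(\<Sum>x\<in>X. (cmod (\<Sum>k\<in>K. c k * e (x * of_int k)))\<^sup>2)
     \<le> 9 * (P + 2) * (real L / 2 + 1 / \<delta>) * (\<Sum>k\<in>K. (cmod (c k))\<^sup>2)"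
proof (cases "\<delta> < 1/2")
  case True
  have P0: "P \<ge> 0" using assms by simp
  have "(\<Sum>x\<in>X. (cmod (\<Sum>k\<in>K. c k * e (x * of_int k)))\<^sup>2)
      \<le> (2 * P + 2) * (2 * real L + 9/2 / \<delta>) * (\<Sum>k\<in>K. (cmod (c k))\<^sup>2)"
    using assms P0 True by (intro large_sieve_from_dual dual_large_sieve) auto
  also have "\<dots> \<le> 9 * (P + 2) * (real L / 2 + 1 / \<delta>) * (\<Sum>k\<in>K. (cmod (c k))\<^sup>2)"
    using assms(1) P0 by (intro mult_right_mono sum_nonneg) (auto simp: field_simps)
  finally show ?thesis .
next
  case False
  have "real (card X) \<le> (P - - P) / \<delta> + 1"
    using assms by (intro card_spaced_le) auto
  moreover have "real (card K) \<le> real L + 1"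
    using card_mono[OF _ assms(6)] by (simp add: of_nat_mono)
  ultimately have "real (card X) * real (card K) \<le> (2 * P / \<delta> + 1) * (real L + 1)"
    by (intro mult_mono) auto
  also have "\<dots> \<le> 9 * (P + 2) * (real L / 2 + 1 / \<delta>)"
    using False assms by (intro sparse_constant_le) auto
  finally have const: "real (card X) * real (card K) \<le> 9 * (P + 2) * (real L / 2 + 1 / \<delta>)" .
  have "(\<Sum>x\<in>X. (cmod (\<Sum>k\<in>K. c k * e (x * of_int k)))\<^sup>2)
      \<le> (\<Sum>x\<in>X. real (card K) * (\<Sum>k\<in>K. (cmod (c k))\<^sup>2))"
    by (intro sum_mono trig_poly_sq_le)
  also have "\<dots> = real (card X) * real (card K) * (\<Sum>k\<in>K. (cmod (c k))\<^sup>2)" by simp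
  also have "\<dots> \<le> 9 * (P + 2) * (real L / 2 + 1 / \<delta>) * (\<Sum>k\<in>K. (cmod (c k))\<^sup>2)"
    using const by (intro mult_right_mono sum_nonneg) auto
  finally show ?thesis .
qed

section \<open>Squaring the exponential sum\<close>

definition pair_sums :: "'i set \<Rightarrow> ('i \<Rightarrow> int) \<Rightarrow> int set" where
  "pair_sums I y = (\<lambda>p. y (fst p) + y (snd p)) ` (I \<times> I)"

definition pair_coeff :: "'i set \<Rightarrow> ('i \<Rightarrow> int) \<Rightarrow> ('i \<Rightarrow> complex) \<Rightarrow> int \<Rightarrow> complex" where
  "pair_coeff I y a k = (\<Sum>p\<in>{p\<in>I \<times> I. y (fst p) + y (snd p) = k}. a (fst p) * a (snd p))"

lemma square_exp_sum:
  assumes "finite I"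
  shows "(\<Sum>i\<in>I. a i * e (x * of_int (y i)))\<^sup>2
    = (\<Sum>k\<in>pair_sums I y. pair_coeff I y a k * e (x * of_int k))"
proof -
  have "(\<Sum>i\<in>I. a i * e (x * of_int (y i)))\<^sup>2
      = (\<Sum>i\<in>I. \<Sum>j\<in>I. (a i * e (x * of_int (y i))) * (a j * e (x * of_int (y j))))"
    unfolding power2_eq_square by (rule sum_product)
  also have "\<dots> = (\<Sum>p\<in>I \<times> I. a (fst p) * a (snd p) * e (x * of_int (y (fst p) + y (snd p))))"
    unfolding sum.cartesian_product
    by (intro sum.cong refl) (auto simp: e_add[symmetric] distrib_left mult_ac)
  also have "\<dots> = (\<Sum>k\<in>pair_sums I y. \<Sum>p\<in>{p\<in>I \<times> I. y (fst p) + y (snd p) = k}.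
                    a (fst p) * a (snd p) * e (x * of_int (y (fst p) + y (snd p))))"
    unfolding pair_sums_def using assms by (intro sum.image_gen) simp
  also have "\<dots> = (\<Sum>k\<in>pair_sums I y. pair_coeff I y a k * e (x * of_int k))"
    unfolding pair_coeff_def sum_distrib_right by (intro sum.cong refl) auto
  finally show ?thesis .
qed

text \<open>Cauchy--Schwarz on each coefficient: \<open>\<Sum>\<^sub>k |c\<^sub>k|\<^sup>2 \<le> (max\<^sub>k A(k)) \<parallel>a\<parallel>\<^sup>4\<close>.\<close>

lemma pair_coeff_l2_le:
  assumes "finite I" "\<And>k. real (A_count I y k) \<le> S"
  shows "(\<Sum>k\<in>pair_sums I y. (cmod (pair_coeff I y a k))\<^sup>2) \<le> S * (\<Sum>i\<in>I. (cmod (a i))\<^sup>2)\<^sup>2"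
proof -
  define G where "G k = {p\<in>I \<times> I. y (fst p) + y (snd p) = k}" for k
  define w where "w p = (cmod (a (fst p) * a (snd p)))\<^sup>2" for p
  have "(cmod (pair_coeff I y a k))\<^sup>2 \<le> S * (\<Sum>p\<in>G k. w p)" for k
  proof -
    have "cmod (pair_coeff I y a k) \<le> (\<Sum>p\<in>G k. cmod (a (fst p) * a (snd p)))"
      unfolding pair_coeff_def G_def by (rule norm_sum)
    then have "(cmod (pair_coeff I y a k))\<^sup>2 \<le> (\<Sum>p\<in>G k. cmod (a (fst p) * a (snd p)))\<^sup>2"
      by (intro power_mono) auto
    also have "\<dots> \<le> real (card (G k)) * (\<Sum>p\<in>G k. w p)"
      unfolding w_def using sum_squared_le_sum_of_squares by (simp add: mult.commute)
    also have "\<dots> \<le> S * (\<Sum>p\<in>G k. w p)"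
    proof (rule mult_right_mono)
      have "card (G k) = A_count I y k" unfolding G_def A_count_def
        by (intro arg_cong[where f=card]) auto
      then show "real (card (G k)) \<le> S" using assms(2)[of k] by simp
    qed (auto simp: w_def intro: sum_nonneg)
    finally show ?thesis .
  qed
  then have "(\<Sum>k\<in>pair_sums I y. (cmod (pair_coeff I y a k))\<^sup>2) \<le> (\<Sum>k\<in>pair_sums I y. S * (\<Sum>p\<in>G k. w p))"
    by (intro sum_mono)
  also have "\<dots> = S * (\<Sum>p\<in>I \<times> I. w p)"
    unfolding sum_distrib_left[symmetric] pair_sums_def G_def using assms(1)
    by (subst sum.image_gen[symmetric]) auto
  also have "(\<Sum>p\<in>I \<times> I. w p) = (\<Sum>i\<in>I. (cmod (a i))\<^sup>2) * (\<Sum>j\<in>I. (cmod (a j))\<^sup>2)"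
    unfolding w_def sum_product sum.cartesian_product
    by (simp add: norm_mult power_mult_distrib case_prod_beta)
  finally show ?thesis by (simp add: power2_eq_square)
qed

text \<open>All frequencies \<open>y\<^sub>i + y\<^sub>j\<close> lie in an interval \<open>[2 min y, 2 min y + L]\<close> with \<open>L \<le> 2\<Delta>\<close>.\<close>

lemma pair_sums_in_interval:
  assumes "finite I"
  obtains k0 L where "pair_sums I y \<subseteq> {k0..k0 + int L}" "real L \<le> 2 * Delta I y"
proof (cases "I = {}")
  case True
  then show ?thesis using that[of 0 0] by (simp add: pair_sums_def Delta_def)
next
  case False
  define m where "m = Min (y ` I)"
  define M where "M = Max (y ` I)"
  have bounds: "m \<le> y i" "y i \<le> M" if "i \<in> I" for i
    using that assms unfolding m_def M_def by auto
  have "m \<in> y ` I" "M \<in> y ` I"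
    unfolding m_def M_def using False assms by (intro Min_in Max_in; simp)+
  then obtain im iM where im: "im \<in> I" "y im = m" and iM: "iM \<in> I" "y iM = M" by auto
  then have "m \<le> M" using bounds by fastforce
  moreover have "real_of_int \<bar>y iM - y im\<bar> \<le> Delta I y"
    unfolding Delta_def using False assms im(1) iM(1) by (auto intro!: Max_ge)
  ultimately have "real_of_int (M - m) \<le> Delta I y" using im iM by simp
  moreover have "pair_sums I y \<subseteq> {2 * m..2 * m + int (2 * nat (M - m))}"
  proof
    fix k assume "k \<in> pair_sums I y"
    then obtain i j where "i \<in> I" "j \<in> I" "k = y i + y j" unfolding pair_sums_def by auto
    then show "k \<in> {2 * m..2 * m + int (2 * nat (M - m))}"
      using bounds[of i] bounds[of j] \<open>m \<le> M\<close> by simp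
  qed
  moreover note \<open>m \<le> M\<close>
  ultimately show ?thesis using that[of "2 * m" "2 * nat (M - m)"] by simp
qed

lemma Delta_nonneg:
  assumes "finite I"
  shows "Delta I y \<ge> 0"
proof (cases "I = {}")
  case False
  then obtain i where "i \<in> I" by auto
  then have "(\<lambda>(i, j). real_of_int \<bar>y i - y j\<bar>) (i, i)
      \<le> Max ((\<lambda>(i, j). real_of_int \<bar>y i - y j\<bar>) ` (I \<times> I))"
    using assms \<open>i \<in> I\<close> by (intro Max_ge imageI) auto
  then show ?thesis using False unfolding Delta_def by simp
qed (simp add: Delta_def)

lemma A_count_le_Sup:
  assumes "finite I"
  shows "real (A_count I y k) \<le> (SUP k::int. real (A_count I y k))"
proof (rule cSUP_upper)
  have "real (A_count I y k') \<le> real (card (I \<times> I))" for k'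
    unfolding A_count_def using assms by (intro of_nat_mono card_mono) auto
  then show "bdd_above (range (\<lambda>k. real (A_count I y k)))"
    by (intro bdd_aboveI2)
qed simp

text \<open>The squared form of the theorem: Cauchy--Schwarz over \<open>X\<close>, then the large sieve for the
  square of the sum.\<close>

lemma squared_mean_value_bound:
  assumes "\<delta> > 0" "delta_spaced \<delta> X" "X \<subseteq> {-P..P}" "finite I"
  shows "(\<Sum>x\<in>X. (cmod (\<Sum>i\<in>I. a i * e (x * real_of_int (y i))))\<^sup>2)\<^sup>2
    \<le> 9 * (real (card X) * Delta I y + real (card X) / \<delta>) * (P + 2)
        * (SUP k::int. real (A_count I y k)) * (\<Sum>i\<in>I. (cmod (a i))\<^sup>2)\<^sup>2"
proof -
  define f where "f x = (\<Sum>i\<in>I. a i * e (x * real_of_int (y i)))" for x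
  define S where "S = (SUP k::int. real (A_count I y k))"
  define n2 where "n2 = (\<Sum>i\<in>I. (cmod (a i))\<^sup>2)"
  define K where "K = pair_sums I y"
  define c where "c = pair_coeff I y a"
  have fX: "finite X" and spX: "spaced \<delta> X"
    using assms(2) unfolding delta_spaced_def spaced_def by auto
  obtain k0 L where KL: "K \<subseteq> {k0..k0 + int L}" and LD: "real L \<le> 2 * Delta I y"
    unfolding K_def using pair_sums_in_interval[OF assms(4)] .
  have S0: "S \<ge> 0" unfolding S_def using A_count_le_Sup[OF assms(4), of y 0] by linarith
  have P0: "P > 0" "\<delta> \<le> 2 * P"
    using delta_spaced_le_diameter[OF assms(2,3)] assms(1) by auto
  have square: "((cmod (f x))\<^sup>2)\<^sup>2 = (cmod (\<Sum>k\<in>K. c k * e (x * of_int k)))\<^sup>2" for x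
  proof -
    have "(f x)\<^sup>2 = (\<Sum>k\<in>K. c k * e (x * of_int k))"
      unfolding f_def K_def c_def by (rule square_exp_sum[OF assms(4)])
    then show ?thesis by (simp flip: norm_power)
  qed
  have LS: "(\<Sum>x\<in>X. (cmod (\<Sum>k\<in>K. c k * e (x * of_int k)))\<^sup>2)
      \<le> 9 * (P + 2) * (real L / 2 + 1 / \<delta>) * (\<Sum>k\<in>K. (cmod (c k))\<^sup>2)"
    by (rule large_sieve[OF assms(1) fX spX assms(3) P0(2) KL])
  have coeff: "(\<Sum>k\<in>K. (cmod (c k))\<^sup>2) \<le> S * n2\<^sup>2"
    unfolding K_def c_def S_def n2_def by (rule pair_coeff_l2_le[OF assms(4) A_count_le_Sup[OF assms(4)]])
  have "(\<Sum>x\<in>X. (cmod (f x))\<^sup>2)\<^sup>2 \<le> real (card X) * (\<Sum>x\<in>X. ((cmod (f x))\<^sup>2)\<^sup>2)"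
    using sum_squared_le_sum_of_squares[of "\<lambda>x. (cmod (f x))\<^sup>2" X] by (simp add: mult.commute)
  also have "\<dots> = real (card X) * (\<Sum>x\<in>X. (cmod (\<Sum>k\<in>K. c k * e (x * of_int k)))\<^sup>2)"
    by (simp only: square)
  also have "\<dots> \<le> real (card X) * (9 * (P + 2) * (real L / 2 + 1 / \<delta>) * (S * n2\<^sup>2))"
    using LS coeff P0(1) assms(1)
    by (intro mult_left_mono order_trans[OF LS] mult_left_mono[OF coeff]) auto
  also have "\<dots> \<le> real (card X) * (9 * (P + 2) * (Delta I y + 1 / \<delta>) * (S * n2\<^sup>2))"
    using LD P0(1) S0 by (intro mult_left_mono mult_right_mono) auto
  also have "\<dots> = 9 * (real (card X) * Delta I y + real (card X) / \<delta>) * (P + 2) * S * n2\<^sup>2"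
    using assms(1) by (simp add: field_simps)
  finally show ?thesis unfolding f_def S_def n2_def .
qed

theorem theorem1:
  fixes \<delta> P :: real and X :: "real set" and I :: "'i set"
    and y :: "'i \<Rightarrow> int" and a :: "'i \<Rightarrow> complex"
  assumes "\<delta> > 0" and "P > 0"
    and "delta_spaced \<delta> X" and "X \<subseteq> {-P..P}"
    and "finite I"
  shows "(\<Sum>x\<in>X. (cmod (\<Sum>i\<in>I. a i * e (x * real_of_int (y i))))\<^sup>2)
    \<le> pi * sqrt (real (card X) * Delta I y + real (card X) / \<delta>) * sqrt (P + 2)
        * sqrt (SUP k::int. real (A_count I y k)) * (\<Sum>i\<in>I. (cmod (a i))\<^sup>2)"
proof -
  define LHS where "LHS = (\<Sum>x\<in>X. (cmod (\<Sum>i\<in>I. a i * e (x * real_of_int (y i))))\<^sup>2)"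
  define N where "N = real (card X) * Delta I y + real (card X) / \<delta>"
  define S where "S = (SUP k::int. real (A_count I y k))"
  define n2 where "n2 = (\<Sum>i\<in>I. (cmod (a i))\<^sup>2)"
  have N0: "N \<ge> 0" unfolding N_def using Delta_nonneg[OF assms(5)] assms(1) by simp
  have S0: "S \<ge> 0" unfolding S_def using A_count_le_Sup[OF assms(5), of y 0] by linarith
  have n20: "n2 \<ge> 0" unfolding n2_def by (auto intro: sum_nonneg)
  have "3 * 3 \<le> pi * pi" using pi_gt3 by (intro mult_mono) auto
  then have "9 \<le> pi\<^sup>2" by (simp add: power2_eq_square)
  have "LHS\<^sup>2 \<le> 9 * N * (P + 2) * S * n2\<^sup>2"
    unfolding LHS_def N_def S_def n2_def by (rule squared_mean_value_bound[OF assms(1,3,4,5)])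
  also have "\<dots> \<le> pi\<^sup>2 * N * (P + 2) * S * n2\<^sup>2"
    using \<open>9 \<le> pi\<^sup>2\<close> N0 S0 assms(2) by (intro mult_right_mono) auto
  also have "\<dots> = (pi * sqrt N * sqrt (P + 2) * sqrt S * n2)\<^sup>2"
    using N0 S0 assms(2) by (simp add: power_mult_distrib)
  finally have "LHS\<^sup>2 \<le> (pi * sqrt N * sqrt (P + 2) * sqrt S * n2)\<^sup>2" .
  then have "LHS \<le> pi * sqrt N * sqrt (P + 2) * sqrt S * n2"
    by (rule power2_le_imp_le) (use n20 N0 S0 assms(2) in simp)
  then show ?thesis unfolding LHS_def N_def S_def n2_def .
qed

end
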